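(* Let $p$ be a prime and $N\geq p$ an integer, and let $\mathcal E_{N,p}$ be the $\mathbb{R}_{\max}$-module of continuous convex piecewise affine functions $f$ on $[1,p]$ with integral slopes such that $f(1)=f(p)$ and $-f'_+(1)+pf'_-(p)\leq N$ (operations: pointwise max, and addition of real constants). Let $\phi_0=0$ and, for $a\in\{1,\dots,N-p\}$, $\phi_a(x)=\max\{-a(x-1),b(x-p)\}$ with $b=\lfloor(N-a)/p\rfloor$. Then each $\phi_a$, $0\leq a\leq N-p$, is an extremal element of $\mathcal E_{N,p}$; the sets $\{\phi_a+x\mid x\in\mathbb{R}_{\max}\}$ are exactly the extremal rays of $\mathcal E_{N,p}$; and these elements generate $\mathcal E_{N,p}$, i.e. the map $\sigma:\mathbb{R}_{\max}^{N-p+1}\to\mathcal E_{N,p}$, $\sigma((x_a))=\max_a(\phi_a+x_a)$, is surjective.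
   Context: $\mathbb{R}_{\max}=\mathbb{R}\cup\{-\infty\}$ with addition $\max$ and multiplication $+$ (so $\phi+(-\infty)$ is the zero element $-\infty$). An element $f$ of an $\mathbb{R}_{\max}$-module is extremal if $f_1\vee f_2=f$ implies $f_1=f$ or $f_2=f$; the set $\{f+x\mid x\in\mathbb{R}_{\max}\}$ for extremal $f$ is called an extremal ray. *)

theory Defs
  imports "HOL-Analysis.Analysis" "HOL-Computational_Algebra.Primes"
begin

text \<open>Elements of the R_max-module are represented as functions real => ereal;
  R_max = ereal without +infinity.\<close>

definition pw_affine_int :: "real \<Rightarrow> real \<Rightarrow> (real \<Rightarrow> real) \<Rightarrow> bool" where
  "pw_affine_int l r g \<longleftrightarrow>
     (\<exists>ts::real list. length ts \<ge> 2 \<and> sorted_wrt (<) ts \<and> hd ts = l \<and> last ts = r \<and>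
        (\<forall>i < length ts - 1. \<exists>s::int. \<exists>c::real.
           \<forall>x\<in>{ts!i .. ts!(i+1)}. g x = real_of_int s * x + c))"

definition E_Np :: "int \<Rightarrow> nat \<Rightarrow> (real \<Rightarrow> ereal) set" where
  "E_Np N p = {\<lambda>x. -\<infinity>} \<union>
     {f. \<exists>g::real \<Rightarrow> real.
          (\<forall>x. f x = (if x \<in> {1..real p} then ereal (g x) else -\<infinity>)) \<and>
          continuous_on {1..real p} g \<and> convex_on {1..real p} g \<and>
          pw_affine_int 1 (real p) g \<and> g 1 = g (real p) \<and>
          (\<exists>d1 dp. (g has_real_derivative d1) (at 1 within {1..real p}) \<and>
                   (g has_real_derivative dp) (at (real p) within {1..real p}) \<and>
                   - d1 + real p * dp \<le> real_of_int N)}"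

definition rmax_extremal :: "(real \<Rightarrow> ereal) set \<Rightarrow> (real \<Rightarrow> ereal) \<Rightarrow> bool" where
  "rmax_extremal E f \<longleftrightarrow> f \<in> E \<and> f \<noteq> (\<lambda>x. -\<infinity>) \<and>
     (\<forall>f1\<in>E. \<forall>f2\<in>E. sup f1 f2 = f \<longrightarrow> f1 = f \<or> f2 = f)"

definition rmax_ray :: "(real \<Rightarrow> ereal) \<Rightarrow> (real \<Rightarrow> ereal) set" where
  "rmax_ray f = {(\<lambda>y. f y + x) | x. x \<noteq> \<infinity>}"

definition phi :: "int \<Rightarrow> nat \<Rightarrow> int \<Rightarrow> real \<Rightarrow> ereal" where
  "phi N p a = (\<lambda>x. if x \<in> {1..real p} then
       ereal (if a = 0 then 0
              else max (- real_of_int a * (x - 1))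
                       (real_of_int \<lfloor>real_of_int (N - a) / real p\<rfloor> * (x - real p)))
     else -\<infinity>)"

definition sigma :: "int \<Rightarrow> nat \<Rightarrow> (int \<Rightarrow> ereal) \<Rightarrow> real \<Rightarrow> ereal" where
  "sigma N p xs = (\<lambda>y. SUP a\<in>{0..N - int p}. phi N p a y + xs a)"

end

theory Submission
  imports Defs
begin

text \<open>Every nonzero element of \<open>E_{N,p}\<close> is the lift of a convex function \<open>g\<close> that is the
  maximum of its finitely many affine pieces. A piece of slope \<open>s\<close> supports \<open>g\<close>; since the
  endpoint slopes \<open>s\<^sub>F \<le> s \<le> s\<^sub>L\<close> are integers with \<open>-s\<^sub>F + p s\<^sub>L \<le> N\<close>, the piece lies
  below a translate of \<open>\<phi>\<^sub>a\<close> (with \<open>a = -s\<close> or \<open>a = N - p s\<close>) which still lies below \<open>g\<close>. Hence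
  \<open>g\<close> is a maximum of translates of the \<open>\<phi>\<^sub>a\<close>, and conversely every such maximum is a
  maximum of finitely many integral lines, taking the same value at \<open>1\<close> and \<open>p\<close>, whose endpoint
  slopes are controlled by the \<open>\<phi>\<^sub>a\<close> attaining that value.

  If \<open>\<phi>\<^sub>a = f\<^sub>1 \<squnion> f\<^sub>2\<close>, one of \<open>f\<^sub>1, f\<^sub>2\<close> agrees with the first branch \<open>-a(x - 1)\<close> of
  \<open>\<phi>\<^sub>a\<close> at two points; convexity then forces it above that branch, and the endpoint condition
  above the second one, so it equals \<open>\<phi>\<^sub>a\<close>. An extremal element, being a finite maximum of
  translates of the \<open>\<phi>\<^sub>a\<close>, is one of these translates.\<close>

section \<open>Convex functions and secant lines\<close>

lemma convex_on_ge_line_outside_chord: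
  fixes g :: "real \<Rightarrow> real"
  assumes cv: "convex_on I g" and I: "u \<in> I" "v \<in> I" "x \<in> I" and uv: "u < v"
    and x: "x \<le> u \<or> v \<le> x" and gu: "g u = s * u + c" and gv: "g v = s * v + c"
  shows "s * x + c \<le> g x"
proof -
  have slope: "(g u - g v) / (u - v) = s"
    using gu gv uv by (simp add: field_simps)
  consider "x < u" | "x = u" | "x = v" | "v < x" using x by linarith
  then show ?thesis
  proof cases
    case 1
    have "(g x - g v) / (x - v) \<le> s"
      using convex_on_slope_le(2)[OF cv I(3) I(2) 1 uv] slope by simp
    then have "s * (x - v) \<le> g x - g v"
      using 1 uv by (simp add: divide_le_eq mult.commute)
    then show ?thesis using gv by (simp add: algebra_simps)
  next
    case 4
    have "s \<le> (g u - g x) / (u - x)"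
      using convex_on_slope_le(1)[OF cv I(1) I(3) uv 4] slope by simp
    then have "s * (x - u) \<le> g x - g u"
      using 4 uv by (simp add: le_divide_eq algebra_simps)
    then show ?thesis using gu by (simp add: algebra_simps)
  qed (use gu gv in auto)
qed

lemma convex_on_ge_affine_piece:
  fixes g :: "real \<Rightarrow> real"
  assumes cv: "convex_on I g" and I: "u \<in> I" "v \<in> I" "x \<in> I" and uv: "u < v"
    and piece: "\<forall>y\<in>{u..v}. g y = s * y + c"
  shows "s * x + c \<le> g x"
proof (cases "x \<in> {u..v}")
  case False
  then show ?thesis
    using convex_on_ge_line_outside_chord[OF cv I uv] piece uv by auto
qed (use piece in auto)

lemma convex_on_ge_line_touching_twice:
  fixes g :: "real \<Rightarrow> real"
  assumes cv: "convex_on {l..r} g" and y: "l < y1" "y1 < y2" "y2 \<le> r" and x: "x \<in> {l..r}"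
    and gl: "g l \<le> s * l + c" and g1: "g y1 = s * y1 + c" and g2: "g y2 = s * y2 + c"
  shows "s * x + c \<le> g x"
proof -
  have "s * l + c \<le> g l"
    using convex_on_ge_line_outside_chord[OF cv _ _ _ y(2)] y g1 g2 by auto
  then have "g l = s * l + c" using gl by simp
  then show ?thesis
    using convex_on_ge_line_outside_chord[OF cv _ _ x y(1)] g1
      convex_on_ge_line_outside_chord[OF cv _ _ x y(2) _ g1 g2] x y
    by (cases "y1 \<le> x") auto
qed

section \<open>Piecewise affine functions with integral slopes\<close>

definition affine_int_on :: "(real \<Rightarrow> real) \<Rightarrow> real \<Rightarrow> real \<Rightarrow> bool" where
  "affine_int_on g u v \<longleftrightarrow> (\<exists>s::int. \<exists>c. \<forall>x\<in>{u..v}. g x = real_of_int s * x + c)"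

lemma pw_affine_int_iff:
  "pw_affine_int l r g \<longleftrightarrow>
     (\<exists>ts. length ts \<ge> 2 \<and> sorted_wrt (<) ts \<and> hd ts = l \<and> last ts = r \<and>
        (\<forall>i < length ts - 1. affine_int_on g (ts!i) (ts!(i+1))))"
  unfolding pw_affine_int_def affine_int_on_def ..

lemma sorted_nth_between_hd_last:
  fixes ts :: "'a::linorder list"
  assumes "sorted ts" "k < length ts"
  shows "hd ts \<le> ts!k \<and> ts!k \<le> last ts"
proof -
  have "ts \<noteq> []" using assms(2) by auto
  then show ?thesis
    using assms sorted_nth_mono[OF assms(1), of 0 k] sorted_nth_mono[OF assms(1), of k "length ts - 1"]
    by (simp add: hd_conv_nth last_conv_nth)
qed

lemma sorted_segment_cover:
  fixes ts :: "'a::linorder list"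
  assumes "sorted ts" "length ts \<ge> 2" "hd ts \<le> y" "y \<le> last ts"
  shows "\<exists>i. i + 1 < length ts \<and> ts!i \<le> y \<and> y \<le> ts!(i+1)"
  using assms
proof (induction ts)
  case (Cons a rest)
  then obtain b rest' where rest: "rest = b # rest'" by (cases rest) auto
  show ?case
  proof (cases "y \<le> b \<or> rest' = []")
    case True
    then show ?thesis using Cons.prems rest by (intro exI[of _ 0]) auto
  next
    case False
    then obtain c rest'' where "rest' = c # rest''" by (cases rest') auto
    then have "\<exists>i. i + 1 < length rest \<and> rest!i \<le> y \<and> y \<le> rest!(i+1)"
      using Cons.IH Cons.prems rest False by auto
    then obtain i where "i + 1 < length rest" "rest!i \<le> y" "y \<le> rest!(i+1)" by blast
    then show ?thesis by (intro exI[of _ "Suc i"]) auto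
  qed
qed simp

lemma pw_affine_int_pieces:
  assumes "pw_affine_int l r g"
  obtains Q :: "(real \<times> real) set" where "finite Q"
    "\<And>u v. (u, v) \<in> Q \<Longrightarrow> l \<le> u \<and> u < v \<and> v \<le> r \<and> affine_int_on g u v"
    "\<And>y. y \<in> {l..r} \<Longrightarrow> \<exists>(u, v)\<in>Q. y \<in> {u..v}"
    "\<exists>t. (l, t) \<in> Q" "\<exists>t. (t, r) \<in> Q"
proof -
  obtain ts where len: "length ts \<ge> 2" and st: "sorted_wrt (<) ts" and hd: "hd ts = l"
    and la: "last ts = r" and pcs: "\<forall>i < length ts - 1. affine_int_on g (ts!i) (ts!(i+1))"
    using assms unfolding pw_affine_int_iff by blast
  have so: "sorted ts" using st strict_sorted_iff by blast
  define Q where "Q = (\<lambda>i. (ts!i, ts!(i+1))) ` {..<length ts - 1}"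
  show thesis
  proof
    show "finite Q" unfolding Q_def by simp
    show "l \<le> u \<and> u < v \<and> v \<le> r \<and> affine_int_on g u v" if "(u, v) \<in> Q" for u v
      using that pcs sorted_wrt_nth_less[OF st] sorted_nth_between_hd_last[OF so] hd la
      unfolding Q_def by fastforce
    show "\<exists>(u, v)\<in>Q. y \<in> {u..v}" if "y \<in> {l..r}" for y
      using sorted_segment_cover[OF so len, of y] that hd la unfolding Q_def by force
    have idx: "length ts - 2 + 1 = length ts - 1" "length ts - 2 < length ts - 1" "0 < length ts - 1"
      using len by auto
    have "(ts!0, ts!(0+1)) \<in> Q" "(ts!(length ts - 2), ts!(length ts - 2 + 1)) \<in> Q"
      unfolding Q_def using idx by blast+
    then have "(ts!0, ts!1) \<in> Q" "(ts!(length ts - 2), ts!(length ts - 1)) \<in> Q"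
      unfolding idx(1) by simp_all
    moreover have "ts \<noteq> []" using len by auto
    then have "l = ts!0" "r = ts!(length ts - 1)" using hd la by (simp_all add: hd_conv_nth last_conv_nth)
    ultimately show "\<exists>t. (l, t) \<in> Q" "\<exists>t. (t, r) \<in> Q" by auto
  qed
qed

lemma pw_affine_intI:
  assumes fin: "finite K" and lr: "l < r" and K: "l \<in> K" "r \<in> K" "K \<subseteq> {l..r}"
    and gaps: "\<And>u v. u \<in> K \<Longrightarrow> v \<in> K \<Longrightarrow> u < v \<Longrightarrow> {u<..<v} \<inter> K = {} \<Longrightarrow> affine_int_on g u v"
  shows "pw_affine_int l r g"
proof -
  define ts where "ts = sorted_list_of_set K"
  have st: "sorted_wrt (<) ts" and so: "sorted ts" and set: "set ts = K"
    using fin by (auto simp: ts_def)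
  have "2 \<le> card {l, r}" using lr by simp
  also have "\<dots> \<le> card K" using fin K by (intro card_mono) auto
  finally have len: "length ts \<ge> 2" using fin by (simp add: ts_def)
  have bounds: "hd ts \<le> z \<and> z \<le> last ts" if "z \<in> K" for z
    using that sorted_nth_between_hd_last[OF so] unfolding set[symmetric] in_set_conv_nth by blast
  have "hd ts \<in> K" "last ts \<in> K" using len set by (auto intro!: hd_in_set last_in_set)
  then have hd: "hd ts = l" and la: "last ts = r" using bounds K by (meson antisym atLeastAtMost_iff subsetD)+
  have "affine_int_on g (ts!i) (ts!(i+1))" if i: "i < length ts - 1" for i
  proof (rule gaps)
    show "ts!i \<in> K" "ts!(i+1) \<in> K" using i set nth_mem[of i ts] nth_mem[of "i+1" ts] by auto
    show "ts!i < ts!(i+1)" using sorted_wrt_nth_less[OF st] i by simp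
    have "z \<le> ts!i \<or> ts!(i+1) \<le> z" if "z \<in> K" for z
    proof -
      obtain k where "k < length ts" "z = ts!k" using \<open>z \<in> K\<close> set by (metis in_set_conv_nth)
      then show ?thesis using sorted_nth_mono[OF so] i by (cases "k \<le> i") auto
    qed
    then show "{ts!i<..<ts!(i+1)} \<inter> K = {}" by fastforce
  qed
  then show ?thesis unfolding pw_affine_int_iff using len st hd la by blast
qed

lemma has_real_derivative_affine_piece_left:
  assumes "l < t" "t \<le> r" "\<forall>x\<in>{l..t}. g x = s * x + c"
  shows "(g has_real_derivative s) (at l within {l..r})"
proof -
  have "((\<lambda>x. s * x + c) has_real_derivative s) (at l within {l..r})"
    by (auto intro!: derivative_eq_intros)
  then show ?thesis
    by (rule has_field_derivative_transform_within[where d = "t - l"])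
      (use assms in \<open>auto simp: dist_real_def\<close>)
qed

lemma has_real_derivative_affine_piece_right:
  assumes "l \<le> t" "t < r" "\<forall>x\<in>{t..r}. g x = s * x + c"
  shows "(g has_real_derivative s) (at r within {l..r})"
proof -
  have "((\<lambda>x. s * x + c) has_real_derivative s) (at r within {l..r})"
    by (auto intro!: derivative_eq_intros)
  then show ?thesis
    by (rule has_field_derivative_transform_within[where d = "r - t"])
      (use assms in \<open>auto simp: dist_real_def\<close>)
qed

lemma pw_affine_int_end_pieces:
  fixes g :: "real \<Rightarrow> real"
  assumes "pw_affine_int l r g"
  obtains s0 s1 :: int and c0 c1 t0 t1
  where "l < t0" "t0 \<le> r" "\<forall>x\<in>{l..t0}. g x = real_of_int s0 * x + c0"
    "l \<le> t1" "t1 < r" "\<forall>x\<in>{t1..r}. g x = real_of_int s1 * x + c1"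
proof -
  obtain Q where "finite Q"
    and Q: "\<And>u v. (u, v) \<in> Q \<Longrightarrow> l \<le> u \<and> u < v \<and> v \<le> r \<and> affine_int_on g u v"
    and "\<And>y. y \<in> {l..r} \<Longrightarrow> \<exists>(u, v)\<in>Q. y \<in> {u..v}"
    and first: "\<exists>t. (l, t) \<in> Q" and last: "\<exists>t. (t, r) \<in> Q"
    by (rule pw_affine_int_pieces[OF assms], rule that) auto
  from first last obtain t0 t1 where t0: "(l, t0) \<in> Q" and t1: "(t1, r) \<in> Q" by blast
  obtain s0 :: int and c0 where piece0: "\<forall>x\<in>{l..t0}. g x = s0 * x + c0"
    using Q[OF t0] unfolding affine_int_on_def by blast
  obtain s1 :: int and c1 where piece1: "\<forall>x\<in>{t1..r}. g x = s1 * x + c1"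
    using Q[OF t1] unfolding affine_int_on_def by blast
  show thesis by (rule that[OF _ _ piece0 _ _ piece1]) (use Q[OF t0] Q[OF t1] in auto)
qed

lemma affine_piece_slope_ge_left:
  fixes g :: "real \<Rightarrow> real"
  assumes "l < t" "\<forall>x\<in>{l..t}. g x = s * x + c" "\<tau> * (t - l) + g l \<le> g t"
  shows "\<tau> \<le> s"
proof -
  have "\<tau> * (t - l) \<le> s * (t - l)" using assms by (simp add: algebra_simps)
  then show ?thesis using assms(1) by (simp add: mult_le_cancel_right)
qed

lemma affine_piece_slope_le_right:
  fixes g :: "real \<Rightarrow> real"
  assumes "t < r" "\<forall>x\<in>{t..r}. g x = s * x + c" "\<tau> * (t - r) + g r \<le> g t"
  shows "s \<le> \<tau>"
proof -
  have "\<tau> * (t - r) \<le> s * (t - r)" using assms by (simp add: algebra_simps)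
  then show ?thesis using assms(1) by (simp add: mult_le_cancel_right)
qed

section \<open>Maxima of finitely many affine functions\<close>

lemma continuous_on_Max:
  fixes h :: "'i \<Rightarrow> 'a::topological_space \<Rightarrow> 'b::linorder_topology"
  assumes "finite I" "I \<noteq> {}" "\<And>k. k \<in> I \<Longrightarrow> continuous_on S (h k)"
  shows "continuous_on S (\<lambda>x. Max ((\<lambda>k. h k x) ` I))"
  using assms
proof (induction I rule: finite_ne_induct)
  case (insert k I)
  then have "continuous_on S (\<lambda>x. Max ((\<lambda>k. h k x) ` I))" by simp
  then have "continuous_on S (\<lambda>x. max (h k x) (Max ((\<lambda>k. h k x) ` I)))"
    using insert.prems by (auto intro!: continuous_on_max)
  then show ?case using insert by simp
qed simp

lemma convex_on_Max_affine:
  fixes s c :: "'i \<Rightarrow> real"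
  assumes fin: "finite I" and ne: "I \<noteq> {}" and S: "convex S"
  shows "convex_on S (\<lambda>x. Max ((\<lambda>k. s k * x + c k) ` I))"
proof (rule convex_onI[OF _ S])
  fix t x y :: real assume t: "0 < t" "t < 1"
  define z where "z = (1 - t) *\<^sub>R x + t *\<^sub>R y"
  have "Max ((\<lambda>k. s k * z + c k) ` I) \<in> (\<lambda>k. s k * z + c k) ` I"
    using fin ne by (intro Max_in) auto
  then obtain j where j: "j \<in> I" "Max ((\<lambda>k. s k * z + c k) ` I) = s j * z + c j" by auto
  have "s j * z + c j = (1 - t) * (s j * x + c j) + t * (s j * y + c j)"
    unfolding z_def by (simp add: algebra_simps)
  also have "\<dots> \<le> (1 - t) * Max ((\<lambda>k. s k * x + c k) ` I) + t * Max ((\<lambda>k. s k * y + c k) ` I)"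
    using t fin j by (intro add_mono mult_left_mono Max_ge) auto
  finally show "Max ((\<lambda>k. s k * ((1 - t) *\<^sub>R x + t *\<^sub>R y) + c k) ` I)
      \<le> (1 - t) * Max ((\<lambda>k. s k * x + c k) ` I) + t * Max ((\<lambda>k. s k * y + c k) ` I)"
    using j unfolding z_def by simp
qed

lemma Max_affine_on_crossing_free_interval:
  fixes s c :: "'i \<Rightarrow> real"
  assumes fin: "finite I" and ne: "I \<noteq> {}" and uv: "u < v"
    and no_cross: "\<And>j k. j \<in> I \<Longrightarrow> k \<in> I \<Longrightarrow> s j \<noteq> s k \<Longrightarrow> (c k - c j) / (s j - s k) \<notin> {u<..<v}"
  shows "\<exists>j\<in>I. \<forall>x\<in>{u..v}. Max ((\<lambda>k. s k * x + c k) ` I) = s j * x + c j"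
proof -
  define m where "m = (u + v) / 2"
  have m: "u < m" "m < v" using uv unfolding m_def by auto
  have "Max ((\<lambda>k. s k * m + c k) ` I) \<in> (\<lambda>k. s k * m + c k) ` I"
    using fin ne by (intro Max_in) auto
  then obtain j where j: "j \<in> I" "Max ((\<lambda>k. s k * m + c k) ` I) = s j * m + c j" by auto
  have jm: "s k * m + c k \<le> s j * m + c j" if "k \<in> I" for k
    using Max_ge[of "(\<lambda>k. s k * m + c k) ` I"] fin that j(2) by auto
  have le: "s k * x + c k \<le> s j * x + c j" if k: "k \<in> I" and x: "x \<in> {u..v}" for k x
  proof (rule ccontr)
    assume gt: "\<not> ?thesis"
    have sjk: "s j \<noteq> s k"
    proof
      assume "s j = s k"
      then show False using gt jm[OF k] by (simp add: algebra_simps)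
    qed
    define z where "z = (c k - c j) / (s j - s k)"
    have z: "(s j - s k) * z = c k - c j" unfolding z_def using sjk by simp
    have at_m: "(s j - s k) * (m - z) \<ge> 0" and at_x: "(s j - s k) * (x - z) < 0"
      using jm[OF k] gt z by (simp_all add: algebra_simps)
    consider "s j - s k > 0" | "s j - s k < 0" using sjk by linarith
    then have "z \<in> {u<..<v}"
    proof cases
      case 1
      then have "z \<le> m" "x < z" using at_m at_x by (simp_all add: zero_le_mult_iff mult_less_0_iff)
      then show ?thesis using x m by auto
    next
      case 2
      then have "m \<le> z" "z < x" using at_m at_x by (simp_all add: zero_le_mult_iff mult_less_0_iff)
      then show ?thesis using x m by auto
    qed
    then show False using no_cross[OF j(1) k sjk] unfolding z_def by blast
  qed
  have "Max ((\<lambda>k. s k * x + c k) ` I) = s j * x + c j" if "x \<in> {u..v}" for x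
  proof (rule antisym)
    show "Max ((\<lambda>k. s k * x + c k) ` I) \<le> s j * x + c j"
      using fin ne le[OF _ that] by simp
    show "s j * x + c j \<le> Max ((\<lambda>k. s k * x + c k) ` I)"
      using fin j(1) by (intro Max_ge) auto
  qed
  then show ?thesis using j(1) by blast
qed

lemma pw_affine_int_Max_affine:
  fixes s :: "'i \<Rightarrow> int" and c :: "'i \<Rightarrow> real"
  assumes fin: "finite I" and ne: "I \<noteq> {}" and lr: "l < r"
  shows "pw_affine_int l r (\<lambda>x. Max ((\<lambda>k. real_of_int (s k) * x + c k) ` I))"
proof -
  define crossings where
    "crossings = (\<lambda>(j, k). (c k - c j) / (real_of_int (s j) - real_of_int (s k))) ` (I \<times> I)"
  define K where "K = {l, r} \<union> (crossings \<inter> {l..r})"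
  have K: "K \<subseteq> {l..r}" using lr unfolding K_def by auto
  show ?thesis
  proof (rule pw_affine_intI)
    show "finite K" unfolding K_def crossings_def using fin by simp
    fix u v assume uv: "u \<in> K" "v \<in> K" "u < v" "{u<..<v} \<inter> K = {}"
    have "(c k - c j) / (real_of_int (s j) - real_of_int (s k)) \<notin> {u<..<v}"
      if "j \<in> I" "k \<in> I" for j k
    proof
      assume z: "(c k - c j) / (real_of_int (s j) - real_of_int (s k)) \<in> {u<..<v}"
      then have "(c k - c j) / (real_of_int (s j) - real_of_int (s k)) \<in> K"
        using that uv(1,2) K unfolding K_def crossings_def by fastforce
      then show False using z uv(4) by blast
    qed
    then have "\<exists>j\<in>I. \<forall>x\<in>{u..v}. Max ((\<lambda>k. real_of_int (s k) * x + c k) ` I)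
        = real_of_int (s j) * x + c j"
      by (intro Max_affine_on_crossing_free_interval[OF fin ne \<open>u < v\<close>]) simp
    then show "affine_int_on (\<lambda>x. Max ((\<lambda>k. real_of_int (s k) * x + c k) ` I)) u v"
      unfolding affine_int_on_def by blast
  qed (use lr K in \<open>auto simp: K_def\<close>)
qed

lemma Max_image_max_eq_Max_pairs:
  fixes f h :: "'i \<Rightarrow> 'a::linorder"
  assumes fin: "finite S" and ne: "S \<noteq> {}"
  shows "Max ((\<lambda>a. max (f a) (h a)) ` S) = Max ((\<lambda>(a, k). if k then f a else h a) ` (S \<times> UNIV))"
    (is "Max ?L = Max ?P")
proof (rule antisym)
  have "f a \<le> Max ?P \<and> h a \<le> Max ?P" if "a \<in> S" for a
  proof -
    have "f a \<in> ?P" by (rule image_eqI[where x = "(a, True)"]) (use that in auto)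
    moreover have "h a \<in> ?P" by (rule image_eqI[where x = "(a, False)"]) (use that in auto)
    ultimately show ?thesis using fin by simp
  qed
  then show "Max ?L \<le> Max ?P" using fin ne by simp
  have "f a \<le> Max ?L \<and> h a \<le> Max ?L" if "a \<in> S" for a
    using fin that Max_ge[of ?L "max (f a) (h a)"] by auto
  then show "Max ?P \<le> Max ?L" using fin ne by auto
qed

lemma rmax_ray_shift: "rmax_ray (\<lambda>y. h y + ereal c) = rmax_ray h"
proof -
  have "(\<lambda>y. h y + ereal c + x) = (\<lambda>y. h y + (ereal c + x))" for x
    by (simp add: add.assoc)
  moreover have "(\<lambda>y. h y + x) = (\<lambda>y. h y + ereal c + (x - ereal c))" for x
  proof -
    have "ereal c + (x - ereal c) = x" by (cases x) auto
    then show ?thesis by (simp add: add.assoc)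
  qed
  moreover have "x \<noteq> \<infinity> \<Longrightarrow> ereal c + x \<noteq> \<infinity>" for x by (cases x) auto
  moreover have "x \<noteq> \<infinity> \<Longrightarrow> x - ereal c \<noteq> \<infinity>" for x by (cases x) auto
  ultimately show ?thesis unfolding rmax_ray_def by blast
qed

lemma rmax_extremal_eq_finite_SUP:
  fixes h :: "'i \<Rightarrow> real \<Rightarrow> ereal"
  assumes ext: "rmax_extremal E f" and fin: "finite T"
    and partial: "\<And>U. U \<subseteq> T \<Longrightarrow> (\<lambda>y. SUP i\<in>U. h i y) \<in> E"
    and f: "f = (\<lambda>y. SUP i\<in>T. h i y)"
  shows "\<exists>i\<in>T. f = h i"
proof -
  have split: "\<And>f1 f2. f1 \<in> E \<Longrightarrow> f2 \<in> E \<Longrightarrow> sup f1 f2 = f \<Longrightarrow> f1 = f \<or> f2 = f"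
    and ne: "f \<noteq> (\<lambda>y. -\<infinity>)"
    using ext unfolding rmax_extremal_def by blast+
  have "U \<subseteq> T \<Longrightarrow> f = (\<lambda>y. SUP i\<in>U. h i y) \<Longrightarrow> \<exists>i\<in>U. f = h i" if "finite U" for U
    using that
  proof (induction U rule: finite_induct)
    case empty
    then show ?case using ne by (simp add: bot_ereal_def)
  next
    case (insert i U)
    have "sup (\<lambda>y. SUP j\<in>{i}. h j y) (\<lambda>y. SUP j\<in>U. h j y) = f"
      using insert.prems(2) by (simp add: sup_fun_def)
    then have "(\<lambda>y. SUP j\<in>{i}. h j y) = f \<or> (\<lambda>y. SUP j\<in>U. h j y) = f"
      using insert.prems(1) by (intro split partial) auto
    moreover have "(\<lambda>y. SUP j\<in>{i}. h j y) = h i" by simp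
    ultimately show ?case using insert.IH insert.prems(1) by auto
  qed
  then show ?thesis using fin f by blast
qed

section \<open>The module \<open>E_{N,p}\<close>\<close>

definition lift :: "nat \<Rightarrow> (real \<Rightarrow> real) \<Rightarrow> real \<Rightarrow> ereal" where
  "lift p g x = (if x \<in> {1..real p} then ereal (g x) else -\<infinity>)"

locale E_space =
  fixes N :: int and p :: nat
  assumes one_less_p: "1 < real p" and p_le_N: "int p \<le> N"
begin

abbreviation indices :: "int set" where
  "indices \<equiv> {0..N - int p}"

definition E_fun :: "(real \<Rightarrow> real) \<Rightarrow> bool" where
  "E_fun g \<longleftrightarrow> continuous_on {1..real p} g \<and> convex_on {1..real p} g \<and>
     pw_affine_int 1 (real p) g \<and> g 1 = g (real p) \<and>
     (\<exists>d1 dp. (g has_real_derivative d1) (at 1 within {1..real p}) \<and>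
              (g has_real_derivative dp) (at (real p) within {1..real p}) \<and>
              - d1 + real p * dp \<le> real_of_int N)"

lemma mem_E_Np_iff: "f \<in> E_Np N p \<longleftrightarrow> f = (\<lambda>x. -\<infinity>) \<or> (\<exists>g. E_fun g \<and> f = lift p g)"
  unfolding E_Np_def E_fun_def lift_def by (auto simp: fun_eq_iff)

text \<open>The second branch is made flat for \<open>a = 0\<close>, so that \<open>phi_real 0 = 0\<close> as in \<open>phi\<close>.\<close>

definition phi_slope :: "int \<Rightarrow> int" where
  "phi_slope a = (if a = 0 then 0 else \<lfloor>real_of_int (N - a) / real p\<rfloor>)"

definition phi_real :: "int \<Rightarrow> real \<Rightarrow> real" where
  "phi_real a y = max (- real_of_int a * (y - 1)) (real_of_int (phi_slope a) * (y - real p))"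

lemma phi_eq_lift: "phi N p a = lift p (phi_real a)"
  unfolding phi_def lift_def phi_real_def phi_slope_def by (simp add: fun_eq_iff)

lemma phi_slope_ge:
  assumes "a \<noteq> 0" "int p * s \<le> N - a"
  shows "s \<le> phi_slope a"
proof -
  have "real_of_int s * real p \<le> real_of_int (N - a)"
    using assms(2) by (metis mult.commute of_int_le_iff of_int_mult of_int_of_nat_eq)
  then have "real_of_int s \<le> real_of_int (N - a) / real p"
    using one_less_p by (simp add: pos_le_divide_eq)
  then show ?thesis using assms(1) unfolding phi_slope_def by (simp add: le_floor_iff)
qed

lemma phi_slope_pos: "a \<in> indices \<Longrightarrow> a \<noteq> 0 \<Longrightarrow> 1 \<le> phi_slope a"
  by (rule phi_slope_ge) auto

lemma phi_slope_nonneg: "a \<in> indices \<Longrightarrow> 0 \<le> phi_slope a"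
  using phi_slope_pos[of a] by (cases "a = 0") (auto simp: phi_slope_def)

lemma phi_slope_bound:
  assumes "a \<in> indices"
  shows "a + int p * phi_slope a \<le> N"
proof (cases "a = 0")
  case False
  have "real_of_int (phi_slope a) \<le> real_of_int (N - a) / real p"
    using False unfolding phi_slope_def by simp
  then have "real p * real_of_int (phi_slope a) \<le> real_of_int (N - a)"
    using one_less_p by (simp add: pos_le_divide_eq mult.commute)
  then have "real_of_int (int p * phi_slope a) \<le> real_of_int (N - a)" by simp
  then show ?thesis by linarith
qed (use p_le_N in \<open>simp add: phi_slope_def\<close>)

lemma phi_real_endpoints:
  assumes "a \<in> indices"
  shows "phi_real a 1 = 0" "phi_real a (real p) = 0"
proof -
  have "real_of_int (phi_slope a) * (1 - real p) \<le> 0"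
    using phi_slope_nonneg[OF assms] one_less_p by (simp add: mult_nonneg_nonpos)
  then show "phi_real a 1 = 0" unfolding phi_real_def by simp
  have "- real_of_int a * (real p - 1) \<le> 0" using assms one_less_p by simp
  then show "phi_real a (real p) = 0" unfolding phi_real_def by simp
qed

lemma phi_real_left_branch:
  assumes a: "a \<in> indices" and y: "1 \<le> y" "real_of_int (a + phi_slope a) * (y - 1) \<le> real p - 1"
  shows "phi_real a y = - real_of_int a * (y - 1)"
proof (cases "a = 0")
  case False
  have "real_of_int (phi_slope a) * (y - real p) + real_of_int a * (y - 1)
      = real_of_int (a + phi_slope a) * (y - 1) - real_of_int (phi_slope a) * (real p - 1)"
    by (simp add: algebra_simps)
  also have "\<dots> \<le> 0"
  proof -
    have "1 * (real p - 1) \<le> real_of_int (phi_slope a) * (real p - 1)"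
      using phi_slope_pos[OF a False] one_less_p by (intro mult_right_mono) auto
    then show ?thesis using y(2) by simp
  qed
  finally show ?thesis unfolding phi_real_def by simp
qed (simp add: phi_real_def phi_slope_def)

lemma E_fun_supporting_slopes:
  assumes "E_fun g"
  obtains sF sL :: int
  where "\<forall>x\<in>{1..real p}. g 1 + sF * (x - 1) \<le> g x"
    "\<forall>x\<in>{1..real p}. g (real p) + sL * (x - real p) \<le> g x"
    "- sF + int p * sL \<le> N"
proof -
  obtain d1 dp where cv: "convex_on {1..real p} g" and pw: "pw_affine_int 1 (real p) g"
    and d1: "(g has_real_derivative d1) (at 1 within {1..real p})"
    and dp: "(g has_real_derivative dp) (at (real p) within {1..real p})"
    and N: "- d1 + real p * dp \<le> real_of_int N"
    using assms unfolding E_fun_def by blast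
  obtain s0 s1 :: int and c0 c1 t0 t1 :: real
    where t0: "1 < t0" "t0 \<le> real p" and piece0: "\<forall>x\<in>{1..t0}. g x = s0 * x + c0"
      and t1: "1 \<le> t1" "t1 < real p" and piece1: "\<forall>x\<in>{t1..real p}. g x = s1 * x + c1"
    by (rule pw_affine_int_end_pieces[OF pw])
  have "d1 = s0"
    using has_field_derivative_unique[OF d1 has_real_derivative_affine_piece_left[OF t0 piece0]]
      one_less_p by (simp add: at_within_Icc_at_right)
  moreover have "dp = s1"
    using has_field_derivative_unique[OF dp has_real_derivative_affine_piece_right[OF t1 piece1]]
      one_less_p by (simp add: at_within_Icc_at_left)
  ultimately have "real_of_int (- s0 + int p * s1) \<le> real_of_int N" using N by simp
  then have "- s0 + int p * s1 \<le> N" by linarith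
  moreover have "g 1 + s0 * (x - 1) \<le> g x" if "x \<in> {1..real p}" for x :: real
    using convex_on_ge_affine_piece[OF cv _ _ that t0(1) piece0] piece0 t0 by (simp add: algebra_simps)
  moreover have "g (real p) + s1 * (x - real p) \<le> g x" if "x \<in> {1..real p}" for x :: real
    using convex_on_ge_affine_piece[OF cv _ _ that t1(2) piece1] piece1 t1 by (simp add: algebra_simps)
  ultimately show thesis using that[of s0 s1] by blast
qed

lemma phi_translate_fits_decreasing_piece:
  fixes g :: "real \<Rightarrow> real" and s :: int and c m :: real
  assumes g: "E_fun g" and below: "\<forall>x\<in>{1..real p}. s * x + c \<le> g x"
    and m: "1 < m" "m < real p" and gm: "g m = s * m + c" and s: "s < 0"
  shows "- s \<in> indices \<and> (\<forall>y\<in>{1..real p}. phi_real (- s) y + (s + c) \<le> g y)"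
proof -
  obtain sF sL :: int where hF: "\<forall>x\<in>{1..real p}. g 1 + sF * (x - 1) \<le> g x"
    and hL: "\<forall>x\<in>{1..real p}. g (real p) + sL * (x - real p) \<le> g x" and N: "- sF + int p * sL \<le> N"
    using E_fun_supporting_slopes[OF g] by blast
  have g1p: "g 1 = g (real p)" using g unfolding E_fun_def by blast
  have m1: "m \<in> {1..real p}" using m by auto
  have l1: "s + c \<le> g 1" using below one_less_p by force
  have "real_of_int sF * (m - 1) \<le> real_of_int s * (m - 1)"
    using hF[rule_format, OF m1] gm l1 by (simp add: algebra_simps)
  then have sFs: "sF \<le> s" using m by (simp add: mult_le_cancel_right)
  have sL: "1 \<le> sL"
  proof (rule ccontr)
    assume "\<not> 1 \<le> sL"
    then have "0 \<le> real_of_int sL * (m - real p)" using m by (intro mult_nonpos_nonpos) auto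
    then have "g 1 \<le> g m" using hL[rule_format, OF m1] g1p by simp
    moreover have "real_of_int s * (m - 1) < 0" using s m by (intro mult_neg_pos) auto
    ultimately show False using gm l1 by (simp add: algebra_simps)
  qed
  have "int p \<le> int p * sL" using mult_left_mono[OF sL, of "int p"] by simp
  then have a: "- s \<in> indices" using N sFs s by auto
  have b: "sL \<le> phi_slope (- s)" using N sFs s by (intro phi_slope_ge) auto
  have "phi_real (- s) y + (s + c) \<le> g y" if y: "y \<in> {1..real p}" for y
  proof -
    have "- real_of_int (- s) * (y - 1) + (s + c) = s * y + c" by (simp add: algebra_simps)
    also have "\<dots> \<le> g y" using below y by blast
    finally have left: "- real_of_int (- s) * (y - 1) + (s + c) \<le> g y" .
    have "(real_of_int (phi_slope (- s)) - real_of_int sL) * (y - real p) \<le> 0"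
      using b y by (intro mult_nonneg_nonpos) auto
    then have "real_of_int (phi_slope (- s)) * (y - real p) + (s + c) \<le> g (real p) + sL * (y - real p)"
      using l1 g1p by (simp add: algebra_simps)
    also have "\<dots> \<le> g y" using hL y by blast
    finally show ?thesis using left unfolding phi_real_def by simp
  qed
  then show ?thesis using a by blast
qed

lemma phi_translate_fits_increasing_piece:
  fixes g :: "real \<Rightarrow> real" and s :: int and c m :: real
  assumes g: "E_fun g" and below: "\<forall>x\<in>{1..real p}. s * x + c \<le> g x"
    and m: "1 < m" "m < real p" and gm: "g m = s * m + c" and s: "0 < s"
  shows "N - int p * s \<in> indices \<and> phi_slope (N - int p * s) = s \<and>
    (\<forall>y\<in>{1..real p}. phi_real (N - int p * s) y + (s * real p + c) \<le> g y)"
proof -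
  obtain sF sL :: int where hF: "\<forall>x\<in>{1..real p}. g 1 + sF * (x - 1) \<le> g x"
    and hL: "\<forall>x\<in>{1..real p}. g (real p) + sL * (x - real p) \<le> g x" and N: "- sF + int p * sL \<le> N"
    using E_fun_supporting_slopes[OF g] by blast
  define a where "a = N - int p * s"
  have g1p: "g 1 = g (real p)" using g unfolding E_fun_def by blast
  have m1: "m \<in> {1..real p}" using m by auto
  have lp: "s * real p + c \<le> g (real p)" using below one_less_p by force
  have "real_of_int s * (real p - m) \<le> real_of_int sL * (real p - m)"
    using hL[rule_format, OF m1] gm lp by (simp add: algebra_simps)
  then have "s \<le> sL" using m by (simp add: mult_le_cancel_right)
  then have ps: "int p * s \<le> int p * sL" by (simp add: mult_left_mono)
  have sF: "sF \<le> -1"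
  proof (rule ccontr)
    assume "\<not> sF \<le> -1"
    then have "0 \<le> real_of_int sF * (m - 1)" using m by (intro mult_nonneg_nonneg) auto
    then have "g (real p) \<le> g m" using hF[rule_format, OF m1] g1p by simp
    moreover have "real_of_int s * (m - real p) < 0" using s m by (intro mult_pos_neg) auto
    ultimately show False using gm lp by (simp add: algebra_simps)
  qed
  have "int p \<le> int p * s" using mult_left_mono[of 1 s "int p"] s by simp
  then have a_idx: "a \<in> indices" and a0: "a \<noteq> 0" using N sF ps unfolding a_def by auto
  have b: "phi_slope a = s" using a0 one_less_p unfolding phi_slope_def a_def by simp
  have "phi_real a y + (s * real p + c) \<le> g y" if y: "y \<in> {1..real p}" for y
  proof -
    have "0 \<le> sF + a" using N ps unfolding a_def by linarith
    then have "0 \<le> (real_of_int sF + real_of_int a) * (y - 1)"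
      using y by (intro mult_nonneg_nonneg) auto
    then have "- real_of_int a * (y - 1) + (s * real p + c) \<le> g 1 + sF * (y - 1)"
      using lp g1p by (simp add: algebra_simps)
    also have "\<dots> \<le> g y" using hF y by blast
    finally have left: "- real_of_int a * (y - 1) + (s * real p + c) \<le> g y" .
    have "real_of_int s * (y - real p) + (s * real p + c) \<le> g y"
      using below y by (simp add: algebra_simps)
    then show ?thesis using left b unfolding phi_real_def by simp
  qed
  then show ?thesis using a_idx b unfolding a_def by blast
qed

text \<open>The translate is \<open>phi_real (-s)\<close> matching the piece at \<open>1\<close> if \<open>s \<le> 0\<close>, and
  \<open>phi_real (N - p s)\<close> matching it at \<open>p\<close> if \<open>s > 0\<close>.\<close>

lemma phi_translate_fits_piece:
  fixes g :: "real \<Rightarrow> real" and s :: int and c m :: real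
  assumes g: "E_fun g" and below: "\<forall>x\<in>{1..real p}. s * x + c \<le> g x"
    and m: "1 < m" "m < real p" and gm: "g m = s * m + c"
  obtains a d where "a \<in> indices" "\<forall>y\<in>{1..real p}. phi_real a y + d \<le> g y"
    "\<forall>y::real. s * y + c \<le> phi_real a y + d"
proof -
  consider "s < 0" | "s = 0" | "0 < s" by linarith
  then show thesis
  proof cases
    case 1
    show thesis
      by (rule that[of "- s" "s + c"])
        (use phi_translate_fits_decreasing_piece[OF assms 1] in \<open>auto simp: phi_real_def algebra_simps\<close>)
  next
    case 2
    show thesis
      by (rule that[of 0 c]) (use below p_le_N 2 in \<open>auto simp: phi_real_def phi_slope_def\<close>)
  next
    case 3
    note fits = phi_translate_fits_increasing_piece[OF assms 3]
    have "s * y + c \<le> phi_real (N - int p * s) y + (s * real p + c)" for y :: real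
      using fits unfolding phi_real_def by (simp add: algebra_simps)
    then show thesis using that fits by blast
  qed
qed

lemma sigma_eq_liftI:
  fixes G :: "real \<Rightarrow> real"
  assumes finite: "\<forall>a\<in>indices. xs a \<noteq> \<infinity>"
    and upper: "\<And>a y. a \<in> indices \<Longrightarrow> y \<in> {1..real p} \<Longrightarrow> phi N p a y + xs a \<le> ereal (G y)"
    and attained: "\<And>y. y \<in> {1..real p} \<Longrightarrow> \<exists>a\<in>indices. ereal (G y) \<le> phi N p a y + xs a"
  shows "sigma N p xs = lift p G"
proof
  fix y
  show "sigma N p xs y = lift p G y"
  proof (cases "y \<in> {1..real p}")
    case True
    obtain a where "a \<in> indices" "ereal (G y) \<le> phi N p a y + xs a" using attained[OF True] by blast
    then have "ereal (G y) \<le> sigma N p xs y" unfolding sigma_def by (blast intro: SUP_upper2)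
    moreover have "sigma N p xs y \<le> ereal (G y)" unfolding sigma_def using upper True by (blast intro: SUP_least)
    ultimately show ?thesis using True by (simp add: lift_def)
  next
    case False
    have minf: "phi N p a y + xs a = -\<infinity>" if "a \<in> indices" for a
      using finite that False by (cases "xs a") (simp_all add: phi_eq_lift lift_def)
    have "sigma N p xs y \<le> -\<infinity>" unfolding sigma_def by (rule SUP_least) (simp add: minf)
    then show ?thesis using False by (simp add: lift_def)
  qed
qed

lemma E_fun_pieces_below_phi_translates:
  assumes g: "E_fun g"
  obtains Q :: "(real \<times> real) set" and A :: "real \<times> real \<Rightarrow> int" and D :: "real \<times> real \<Rightarrow> real"
  where "finite Q" "\<forall>y\<in>{1..real p}. \<exists>(u, v)\<in>Q. y \<in> {u..v}"
    "\<forall>q\<in>Q. A q \<in> indices"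
    "\<forall>q\<in>Q. \<forall>y\<in>{1..real p}. phi_real (A q) y + D q \<le> g y"
    "\<forall>(u, v)\<in>Q. \<forall>y\<in>{u..v}. g y \<le> phi_real (A (u, v)) y + D (u, v)"
proof -
  have cv: "convex_on {1..real p} g" and pw: "pw_affine_int 1 (real p) g"
    using g unfolding E_fun_def by blast+
  obtain Q where fin: "finite Q"
    and Q: "\<And>u v. (u, v) \<in> Q \<Longrightarrow> 1 \<le> u \<and> u < v \<and> v \<le> real p \<and> affine_int_on g u v"
    and cover: "\<And>y. y \<in> {1..real p} \<Longrightarrow> \<exists>(u, v)\<in>Q. y \<in> {u..v}"
    by (rule pw_affine_int_pieces[OF pw], rule that) auto
  have "\<exists>a d. a \<in> indices \<and> (\<forall>y\<in>{1..real p}. phi_real a y + d \<le> g y) \<and>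
      (\<forall>y\<in>{fst q..snd q}. g y \<le> phi_real a y + d)" if q: "q \<in> Q" for q
  proof -
    obtain u v where uv: "q = (u, v)" by (cases q)
    obtain s :: int and c where piece: "\<forall>x\<in>{u..v}. g x = s * x + c" and bounds: "1 \<le> u" "u < v" "v \<le> real p"
      using Q q unfolding uv affine_int_on_def by blast
    have below: "\<forall>x\<in>{1..real p}. s * x + c \<le> g x"
      using convex_on_ge_affine_piece[OF cv _ _ _ \<open>u < v\<close> piece] bounds by auto
    define m where "m = (u + v) / 2"
    have m: "1 < m" "m < real p" "g m = s * m + c" using bounds piece unfolding m_def by auto
    obtain a d where "a \<in> indices" "\<forall>y\<in>{1..real p}. phi_real a y + d \<le> g y"
      "\<forall>y::real. s * y + c \<le> phi_real a y + d"
      using phi_translate_fits_piece[OF g below m] by blast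
    then show ?thesis using piece unfolding uv by auto
  qed
  then obtain A D where AD: "\<forall>q\<in>Q. A q \<in> indices \<and> (\<forall>y\<in>{1..real p}. phi_real (A q) y + D q \<le> g y) \<and>
      (\<forall>y\<in>{fst q..snd q}. g y \<le> phi_real (A q) y + D q)"
    by metis
  show thesis by (rule that[of Q A D]) (use fin cover AD in auto)
qed

lemma E_fun_eq_sigma:
  assumes g: "E_fun g"
  obtains xs where "\<forall>a\<in>indices. xs a \<noteq> \<infinity>" "sigma N p xs = lift p g"
proof -
  obtain Q A D where fin: "finite Q" and cover: "\<forall>y\<in>{1..real p}. \<exists>(u, v)\<in>Q. y \<in> {u..v}"
    and A: "\<forall>q\<in>Q. A q \<in> indices"
    and below: "\<forall>q\<in>Q. \<forall>y\<in>{1..real p}. phi_real (A q) y + D q \<le> g y"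
    and above: "\<forall>(u, v)\<in>Q. \<forall>y\<in>{u..v}. g y \<le> phi_real (A (u, v)) y + D (u, v)"
    by (rule E_fun_pieces_below_phi_translates[OF g])
  define Q_of where "Q_of a = {q \<in> Q. A q = a}" for a
  define xs where "xs a = (if Q_of a = {} then -\<infinity> else ereal (Max (D ` Q_of a)))" for a
  have fin_Q_of: "finite (Q_of a)" for a using fin unfolding Q_of_def by simp
  show thesis
  proof (rule that)
    show "\<forall>a\<in>indices. xs a \<noteq> \<infinity>" unfolding xs_def by simp
    show "sigma N p xs = lift p g"
    proof (rule sigma_eq_liftI)
      fix a y assume y: "y \<in> {1..real p}"
      show "phi N p a y + xs a \<le> ereal (g y)"
      proof (cases "Q_of a = {}")
        case False
        have "Max (D ` Q_of a) \<in> D ` Q_of a" using fin_Q_of False by (intro Max_in) auto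
        then obtain q where q: "q \<in> Q_of a" "Max (D ` Q_of a) = D q" by auto
        then have "xs a = ereal (D q)" using False unfolding xs_def by simp
        with q show ?thesis using below y unfolding Q_of_def by (auto simp: phi_eq_lift lift_def)
      qed (simp add: xs_def phi_eq_lift lift_def)
    next
      fix y assume y: "y \<in> {1..real p}"
      obtain u v where q: "(u, v) \<in> Q" "y \<in> {u..v}" using cover y by blast
      then have "(u, v) \<in> Q_of (A (u, v))" unfolding Q_of_def by simp
      have "g y \<le> phi_real (A (u, v)) y + D (u, v)" using above q by auto
      also have "\<dots> \<le> phi_real (A (u, v)) y + Max (D ` Q_of (A (u, v)))"
        using fin_Q_of \<open>(u, v) \<in> Q_of _\<close> by simp
      finally have "ereal (g y) \<le> phi N p (A (u, v)) y + xs (A (u, v))"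
        using y \<open>(u, v) \<in> Q_of _\<close> unfolding xs_def by (auto simp: phi_eq_lift lift_def)
      then show "\<exists>a\<in>indices. ereal (g y) \<le> phi N p a y + xs a" using A q(1) by blast
    qed (simp add: xs_def)
  qed
qed

lemma continuous_convex_pw_affine_Max_phi_translates:
  fixes S :: "int set" and r :: "int \<Rightarrow> real"
  assumes fin: "finite S" and ne: "S \<noteq> {}"
  defines "G \<equiv> \<lambda>y. Max ((\<lambda>a. phi_real a y + r a) ` S)"
  shows "continuous_on {1..real p} G \<and> convex_on {1..real p} G \<and> pw_affine_int 1 (real p) G"
proof -
  \<comment> \<open>\<open>(a, True)\<close> indexes the first branch of \<open>phi_real a + r a\<close>, \<open>(a, False)\<close> the second.\<close>
  define sl where "sl = (\<lambda>(a, k). if k then - a else phi_slope a)"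
  define cc where "cc = (\<lambda>(a, k). if k then real_of_int a + r a else r a - real_of_int (phi_slope a) * real p)"
  have "G y = Max ((\<lambda>j. real_of_int (sl j) * y + cc j) ` (S \<times> UNIV))" for y
  proof -
    have "G y = Max ((\<lambda>a. max (- real_of_int a * (y - 1) + r a) (real_of_int (phi_slope a) * (y - real p) + r a)) ` S)"
      unfolding G_def phi_real_def by (simp add: max_add_distrib_left)
    also have "\<dots> = Max ((\<lambda>j. real_of_int (sl j) * y + cc j) ` (S \<times> UNIV))"
      unfolding Max_image_max_eq_Max_pairs[OF fin ne] sl_def cc_def
      by (intro arg_cong[where f = Max] image_cong) (auto simp: algebra_simps)
    finally show ?thesis .
  qed
  then have G: "G = (\<lambda>y. Max ((\<lambda>j. real_of_int (sl j) * y + cc j) ` (S \<times> UNIV)))" by blast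
  have fin2: "finite (S \<times> (UNIV :: bool set))" and ne2: "S \<times> (UNIV :: bool set) \<noteq> {}"
    using fin ne by auto
  have "continuous_on {1..real p} G"
    unfolding G by (rule continuous_on_Max[OF fin2 ne2]) (intro continuous_intros)
  moreover have "convex_on {1..real p} G"
    unfolding G by (rule convex_on_Max_affine[OF fin2 ne2]) simp
  moreover have "pw_affine_int 1 (real p) G"
    unfolding G by (rule pw_affine_int_Max_affine[OF fin2 ne2 one_less_p])
  ultimately show ?thesis by blast
qed

lemma E_fun_Max_phi_translates:
  fixes S :: "int set" and r :: "int \<Rightarrow> real"
  assumes fin: "finite S" and ne: "S \<noteq> {}" and S: "S \<subseteq> indices"
  shows "E_fun (\<lambda>y. Max ((\<lambda>a. phi_real a y + r a) ` S))" (is "E_fun ?G")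
proof -
  have shape: "continuous_on {1..real p} ?G" "convex_on {1..real p} ?G" "pw_affine_int 1 (real p) ?G"
    using continuous_convex_pw_affine_Max_phi_translates[OF fin ne] by blast+
  have "Max (r ` S) \<in> r ` S" using fin ne by (intro Max_in) auto
  then obtain a where a: "a \<in> S" "r a = Max (r ` S)" by auto
  have ends: "?G 1 = r a" "?G (real p) = r a"
    using phi_real_endpoints S a by (simp_all add: subset_iff)
  have a_below: "phi_real a y + r a \<le> ?G y" for y using fin a(1) by (intro Max_ge) auto
  obtain s0 s1 :: int and c0 c1 t0 t1 :: real
    where t0: "1 < t0" "t0 \<le> real p" and piece0: "\<forall>x\<in>{1..t0}. ?G x = s0 * x + c0"
      and t1: "1 \<le> t1" "t1 < real p" and piece1: "\<forall>x\<in>{t1..real p}. ?G x = s1 * x + c1"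
    by (rule pw_affine_int_end_pieces[OF shape(3)])
  have "- real_of_int a * (t0 - 1) + ?G 1 \<le> ?G t0"
    using a_below[of t0] ends(1) unfolding phi_real_def by simp
  then have "real_of_int (- a) \<le> real_of_int s0"
    by (intro affine_piece_slope_ge_left[OF t0(1) piece0]) simp
  then have "- a \<le> s0" by (simp only: of_int_le_iff)
  moreover have "real_of_int (phi_slope a) * (t1 - real p) + ?G (real p) \<le> ?G t1"
    using a_below[of t1] ends(2) unfolding phi_real_def by simp
  then have "real_of_int s1 \<le> real_of_int (phi_slope a)"
    by (rule affine_piece_slope_le_right[OF t1(2) piece1])
  then have "s1 \<le> phi_slope a" by (simp only: of_int_le_iff)
  then have "int p * s1 \<le> int p * phi_slope a" by (simp add: mult_left_mono)
  ultimately have "- s0 + int p * s1 \<le> N" using phi_slope_bound[of a] a(1) S by auto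
  then have "- real_of_int s0 + real p * real_of_int s1 \<le> real_of_int N"
    by (metis of_int_add of_int_le_iff of_int_minus of_int_mult of_int_of_nat_eq)
  moreover note has_real_derivative_affine_piece_left[OF t0 piece0]
    has_real_derivative_affine_piece_right[OF t1 piece1]
  moreover have "?G 1 = ?G (real p)" using ends by simp
  ultimately show ?thesis using shape unfolding E_fun_def by blast
qed

lemma sigma_in_E_Np:
  assumes xs: "\<forall>a\<in>indices. xs a \<noteq> \<infinity>"
  shows "sigma N p xs \<in> E_Np N p"
proof -
  define S where "S = {a \<in> indices. xs a \<noteq> -\<infinity>}"
  define r where "r a = real_of_ereal (xs a)" for a
  have r: "xs a = ereal (r a)" if "a \<in> S" for a
    using that xs unfolding S_def r_def by (cases "xs a") auto
  have fin: "finite S" unfolding S_def by (rule finite_subset[of _ indices]) auto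
  show ?thesis
  proof (cases "S = {}")
    case True
    have minf: "phi N p a y + xs a = -\<infinity>" if "a \<in> indices" for a y
      using True that unfolding S_def by (simp add: phi_eq_lift lift_def)
    have "sigma N p xs = (\<lambda>y. -\<infinity>)"
      unfolding sigma_def by (rule ext, rule antisym, rule SUP_least) (simp_all add: minf)
    then show ?thesis unfolding mem_E_Np_iff by blast
  next
    case False
    define G where "G y = Max ((\<lambda>a. phi_real a y + r a) ` S)" for y
    have "sigma N p xs = lift p G"
    proof (rule sigma_eq_liftI[OF xs])
      fix a y assume a: "a \<in> indices" and y: "y \<in> {1..real p}"
      show "phi N p a y + xs a \<le> ereal (G y)"
      proof (cases "a \<in> S")
        case True
        have "phi_real a y + r a \<le> G y" unfolding G_def using fin True by (intro Max_ge) auto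
        then show ?thesis using True y r by (simp add: phi_eq_lift lift_def)
      next
        case False
        then have "xs a = -\<infinity>" using a unfolding S_def by simp
        then show ?thesis by (simp add: phi_eq_lift lift_def)
      qed
    next
      fix y assume y: "y \<in> {1..real p}"
      have "G y \<in> (\<lambda>a. phi_real a y + r a) ` S" unfolding G_def using fin False by (intro Max_in) auto
      then obtain a where a: "a \<in> S" "G y = phi_real a y + r a" by auto
      then have "ereal (G y) = phi N p a y + xs a" using r[OF a(1)] y by (simp add: phi_eq_lift lift_def)
      moreover have "a \<in> indices" using a(1) unfolding S_def by simp
      ultimately show "\<exists>a\<in>indices. ereal (G y) \<le> phi N p a y + xs a" by force
    qed
    moreover have "E_fun G"
      unfolding G_def by (rule E_fun_Max_phi_translates[OF fin False]) (auto simp: S_def)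
    ultimately show ?thesis unfolding mem_E_Np_iff by blast
  qed
qed

lemma sigma_restrict:
  assumes "T \<subseteq> indices"
  shows "sigma N p (\<lambda>b. if b \<in> T then xs b else -\<infinity>) = (\<lambda>y. SUP b\<in>T. phi N p b y + xs b)"
proof
  fix y
  have "phi N p b y + (if b \<in> T then xs b else -\<infinity>) = (if b \<in> T then phi N p b y + xs b else -\<infinity>)" for b
    by (simp add: phi_eq_lift lift_def)
  then have "sigma N p (\<lambda>b. if b \<in> T then xs b else -\<infinity>) y
      = (SUP b\<in>indices. if b \<in> T then phi N p b y + xs b else -\<infinity>)"
    unfolding sigma_def by simp
  also have "\<dots> = (SUP b\<in>T. phi N p b y + xs b)"
  proof (rule antisym)
    show "(SUP b\<in>indices. if b \<in> T then phi N p b y + xs b else -\<infinity>) \<le> (SUP b\<in>T. phi N p b y + xs b)"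
      by (rule SUP_least) (auto intro: SUP_upper)
    show "(SUP b\<in>T. phi N p b y + xs b) \<le> (SUP b\<in>indices. if b \<in> T then phi N p b y + xs b else -\<infinity>)"
    proof (rule SUP_least)
      fix b assume "b \<in> T"
      then show "phi N p b y + xs b \<le> (SUP b\<in>indices. if b \<in> T then phi N p b y + xs b else -\<infinity>)"
        by (intro SUP_upper2[of b]) (use assms in auto)
    qed
  qed
  finally show "sigma N p (\<lambda>b. if b \<in> T then xs b else -\<infinity>) y = (SUP b\<in>T. phi N p b y + xs b)" .
qed

lemma E_Np_eq_sigma:
  assumes "f \<in> E_Np N p"
  obtains xs where "\<forall>a\<in>indices. xs a \<noteq> \<infinity>" "sigma N p xs = f"
proof (cases "f = (\<lambda>x. -\<infinity>)")
  case True
  have "sigma N p (\<lambda>b. if b \<in> {} then 0 else -\<infinity>) = f"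
    using sigma_restrict[of "{}" "\<lambda>b. 0"] True by (simp add: bot_ereal_def)
  then show thesis using that[of "\<lambda>b. if b \<in> {} then 0 else -\<infinity>"] by simp
next
  case False
  then obtain g where g: "E_fun g" "f = lift p g" using assms unfolding mem_E_Np_iff by blast
  obtain xs where "\<forall>a\<in>indices. xs a \<noteq> \<infinity>" "sigma N p xs = lift p g"
    by (rule E_fun_eq_sigma[OF g(1)])
  then show thesis using that g(2) by simp
qed

lemma phi_in_E_Np:
  assumes "a \<in> indices"
  shows "phi N p a \<in> E_Np N p"
proof -
  have "E_fun (\<lambda>y. Max ((\<lambda>b. phi_real b y + 0) ` {a}))"
    by (rule E_fun_Max_phi_translates) (use assms in auto)
  then show ?thesis unfolding mem_E_Np_iff phi_eq_lift by auto
qed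

lemma phi_ne_minf: "phi N p a \<noteq> (\<lambda>x. -\<infinity>)"
proof
  assume "phi N p a = (\<lambda>x. -\<infinity>)"
  then have "phi N p a 1 = -\<infinity>" by simp
  then show False using one_less_p by (simp add: phi_eq_lift lift_def)
qed

lemma eq_phi_if_below_touching_twice:
  assumes a: "a \<in> indices" and f: "f \<in> E_Np N p" and below: "\<forall>y. f y \<le> phi N p a y"
    and y: "1 < y1" "y1 < y2" "y2 \<le> real p"
    and f1: "f y1 = ereal (- real_of_int a * (y1 - 1))"
    and f2: "f y2 = ereal (- real_of_int a * (y2 - 1))"
  shows "f = phi N p a"
proof -
  obtain g where E: "E_fun g" and fg: "f = lift p g"
    using f f1 unfolding mem_E_Np_iff by auto
  have cv: "convex_on {1..real p} g" and g1p: "g 1 = g (real p)" using E unfolding E_fun_def by blast+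
  have g_le: "g y \<le> phi_real a y" if "y \<in> {1..real p}" for y
    using below[rule_format, of y] that unfolding fg phi_eq_lift lift_def by simp
  have g1: "g y1 = - real_of_int a * y1 + real_of_int a" and g2: "g y2 = - real_of_int a * y2 + real_of_int a"
    using f1 f2 y unfolding fg lift_def by (auto simp: algebra_simps)
  have "g 1 \<le> - real_of_int a * 1 + real_of_int a"
    using g_le[of 1] phi_real_endpoints(1)[OF a] one_less_p by simp
  then have left: "- real_of_int a * (x - 1) \<le> g x" if "x \<in> {1..real p}" for x
    using convex_on_ge_line_touching_twice[OF cv y that _ g1 g2] by (simp add: algebra_simps)
  have g1_0: "g 1 = 0" using left[of 1] g_le[of 1] phi_real_endpoints(1)[OF a] one_less_p by simp
  have right: "real_of_int (phi_slope a) * (x - real p) \<le> g x" if x: "x \<in> {1..real p}" for x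
  proof (cases "a = 0")
    case True
    then show ?thesis using left[OF x] by (simp add: phi_slope_def)
  next
    case False
    obtain sF sL :: int where hF: "\<forall>x\<in>{1..real p}. g 1 + sF * (x - 1) \<le> g x"
      and hL: "\<forall>x\<in>{1..real p}. g (real p) + sL * (x - real p) \<le> g x" and N: "- sF + int p * sL \<le> N"
      using E_fun_supporting_slopes[OF E] by blast
    have "g 1 + sF * (y1 - 1) \<le> g y1" using hF y by auto
    then have "real_of_int sF * (y1 - 1) \<le> real_of_int (- a) * (y1 - 1)"
      using g1 g1_0 by (simp add: algebra_simps)
    then have "real_of_int sF \<le> real_of_int (- a)" by (rule mult_right_le_imp_le) (use y in simp)
    then have "sL \<le> phi_slope a" using N False by (intro phi_slope_ge) auto
    then have "real_of_int (phi_slope a) * (x - real p) \<le> real_of_int sL * (x - real p)"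
      using x by (intro mult_right_mono_neg) auto
    also have "\<dots> \<le> g x" using hL x g1p g1_0 by auto
    finally show ?thesis .
  qed
  have "g y = phi_real a y" if "y \<in> {1..real p}" for y
    using g_le[OF that] left[OF that] right[OF that] unfolding phi_real_def by simp
  then show ?thesis unfolding fg phi_eq_lift lift_def by auto
qed

lemma phi_extremal:
  assumes a: "a \<in> indices"
  shows "rmax_extremal (E_Np N p) (phi N p a)"
  unfolding rmax_extremal_def
proof (intro conjI ballI impI)
  show "phi N p a \<in> E_Np N p" using phi_in_E_Np[OF a] .
  show "phi N p a \<noteq> (\<lambda>x. -\<infinity>)" by (rule phi_ne_minf)
  fix f1 f2 assume f1: "f1 \<in> E_Np N p" and f2: "f2 \<in> E_Np N p" and sup: "sup f1 f2 = phi N p a"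
  have max: "max (f1 y) (f2 y) = phi N p a y" for y using fun_cong[OF sup, of y] by (simp add: sup_max)
  have below: "\<forall>y. f1 y \<le> phi N p a y" "\<forall>y. f2 y \<le> phi N p a y"
    using max by (metis max.cobounded1, metis max.cobounded2)
  \<comment> \<open>\<open>z 1 < z 2 < z 3\<close> lie on the first branch of \<open>phi N p a\<close>; one of \<open>f1, f2\<close> meets it at two.\<close>
  define \<delta> where "\<delta> = (real p - 1) / (3 * real_of_int (a + phi_slope a + 1))"
  define z where "z j = 1 + real j * \<delta>" for j :: nat
  have D: "1 \<le> real_of_int (a + phi_slope a + 1)" using a phi_slope_nonneg[OF a] by simp
  have \<delta>: "0 < \<delta>" "3 * \<delta> * real_of_int (a + phi_slope a + 1) = real p - 1"
    using D one_less_p unfolding \<delta>_def by (auto simp: field_simps)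
  have z: "1 < z j \<and> z j \<le> real p \<and> phi N p a (z j) = ereal (- real_of_int a * (z j - 1))"
    if j: "1 \<le> j" "j \<le> 3" for j
  proof -
    have jd: "real j * \<delta> \<le> 3 * \<delta>" using j \<delta> by (intro mult_right_mono) auto
    have "real_of_int (a + phi_slope a) * (z j - 1) \<le> real_of_int (a + phi_slope a + 1) * (3 * \<delta>)"
      unfolding z_def using jd \<delta>(1) a phi_slope_nonneg[OF a] by (intro mult_mono) auto
    also have "\<dots> = real p - 1" using \<delta>(2) by (simp add: algebra_simps)
    finally have branch: "real_of_int (a + phi_slope a) * (z j - 1) \<le> real p - 1" .
    have "3 * \<delta> \<le> 3 * \<delta> * real_of_int (a + phi_slope a + 1)"
      using \<delta>(1) D by (simp add: mult_le_cancel_left1)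
    then have "z j \<le> real p" using jd \<delta>(2) unfolding z_def by simp
    moreover have "1 < z j" using j \<delta>(1) unfolding z_def by simp
    ultimately show ?thesis
      using phi_real_left_branch[OF a _ branch] by (simp add: phi_eq_lift lift_def)
  qed
  have z_mono: "z j < z k" if "j < k" for j k unfolding z_def using that \<delta>(1) by simp
  have hit: "f1 (z j) = phi N p a (z j) \<or> f2 (z j) = phi N p a (z j)" for j
    using max[of "z j"] by (metis max_def)
  obtain f j k where f: "f = f1 \<or> f = f2" and jk: "(j, k) \<in> {(1, 2), (1, 3), (2, 3)}"
    and hits: "f (z j) = phi N p a (z j)" "f (z k) = phi N p a (z k)"
    using hit[of 1] hit[of 2] hit[of 3] by blast
  have "f \<in> E_Np N p" "\<forall>y. f y \<le> phi N p a y" using f f1 f2 below by blast+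
  moreover have "1 \<le> j" "j < k" "k \<le> 3" using jk by auto
  ultimately have "f = phi N p a"
    using eq_phi_if_below_touching_twice[OF a, of f "z j" "z k"] z[of j] z[of k] z_mono[of j k] hits
    by auto
  then show "f1 = phi N p a \<or> f2 = phi N p a" using f by blast
qed

lemma rmax_extremal_is_phi_translate:
  assumes ext: "rmax_extremal (E_Np N p) f"
  obtains a c where "a \<in> indices" "f = (\<lambda>y. phi N p a y + ereal c)"
proof -
  have fE: "f \<in> E_Np N p" and ne: "f \<noteq> (\<lambda>x. -\<infinity>)" using ext unfolding rmax_extremal_def by blast+
  obtain xs where xs: "\<forall>a\<in>indices. xs a \<noteq> \<infinity>" and "sigma N p xs = f"
    by (rule E_Np_eq_sigma[OF fE])
  then have f: "f = sigma N p xs" by simp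
  have "\<exists>a\<in>indices. f = (\<lambda>y. phi N p a y + xs a)"
  proof (rule rmax_extremal_eq_finite_SUP[OF ext])
    fix U assume "U \<subseteq> indices"
    then show "(\<lambda>y. SUP a\<in>U. phi N p a y + xs a) \<in> E_Np N p"
      using sigma_restrict[of U xs] sigma_in_E_Np[of "\<lambda>b. if b \<in> U then xs b else -\<infinity>"] xs by auto
  qed (use f in \<open>simp_all add: sigma_def\<close>)
  then obtain a where a: "a \<in> indices" "f = (\<lambda>y. phi N p a y + xs a)" by blast
  have "xs a \<noteq> -\<infinity>"
  proof
    assume "xs a = -\<infinity>"
    then have "f = (\<lambda>y. -\<infinity>)" using a(2) by (auto simp: phi_eq_lift lift_def fun_eq_iff)
    then show False using ne by simp
  qed
  then obtain c where "xs a = ereal c" using xs a(1) by (cases "xs a") auto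
  then show thesis using that a by simp
qed

lemma extremal_rays_eq:
  "{rmax_ray f | f. rmax_extremal (E_Np N p) f} = (\<lambda>a. rmax_ray (phi N p a)) ` indices"
proof (intro equalityI subsetI)
  fix X assume "X \<in> {rmax_ray f | f. rmax_extremal (E_Np N p) f}"
  then obtain f where X: "X = rmax_ray f" and ext: "rmax_extremal (E_Np N p) f" by blast
  obtain a c where "a \<in> indices" "f = (\<lambda>y. phi N p a y + ereal c)"
    by (rule rmax_extremal_is_phi_translate[OF ext])
  then show "X \<in> (\<lambda>a. rmax_ray (phi N p a)) ` indices" using X rmax_ray_shift by auto
next
  fix X assume "X \<in> (\<lambda>a. rmax_ray (phi N p a)) ` indices"
  then show "X \<in> {rmax_ray f | f. rmax_extremal (E_Np N p) f}" using phi_extremal by blast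
qed

end

theorem propositionA2:
  fixes p :: nat and N :: int
  assumes "prime p" and "N \<ge> int p"
  shows "(\<forall>a\<in>{0..N - int p}. rmax_extremal (E_Np N p) (phi N p a))
     \<and> {rmax_ray f | f. rmax_extremal (E_Np N p) f} = (\<lambda>a. rmax_ray (phi N p a)) ` {0..N - int p}
     \<and> (\<forall>xs. (\<forall>a\<in>{0..N - int p}. xs a \<noteq> \<infinity>) \<longrightarrow> sigma N p xs \<in> E_Np N p)
     \<and> (\<forall>f\<in>E_Np N p. \<exists>xs. (\<forall>a\<in>{0..N - int p}. xs a \<noteq> \<infinity>) \<and> sigma N p xs = f)"
proof -
  interpret E_space N p
    by unfold_locales (use assms prime_gt_1_nat in auto)
  have "\<exists>xs. (\<forall>a\<in>indices. xs a \<noteq> \<infinity>) \<and> sigma N p xs = f" if "f \<in> E_Np N p" for f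
    using E_Np_eq_sigma[OF that] by blast
  then show ?thesis using phi_extremal extremal_rays_eq sigma_in_E_Np by blast
qed

end
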